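(* Let $D=(E,\mathcal{F})$ be a normal delta-matroid and $A\subseteq E$, with $A^{c}=E\setminus A$. Then $w(D*A)=w(D|_{A})+w(D|_{A^{c}})$.
   Context: A delta-matroid is a set system $(E,\mathcal{F})$, $\mathcal{F}\ne\emptyset$ a family of subsets of finite $E$, satisfying: for all $X,Y\in\mathcal{F}$ and $u\in X\Delta Y$ there is $v\in X\Delta Y$ with $X\Delta\{u,v\}\in\mathcal{F}$. It is normal if $\emptyset\in\mathcal{F}$. Twist: $D*A=(E,\{A\Delta X:X\in\mathcal{F}\})$. Width $w(D)$ = maximum minus minimum cardinality of feasible sets (so a delta-matroid on the empty ground set has width $0$). An element is a coloop if it lies in every feasible set. Deletion: $D\setminus e=(E\setminus e,\mathcal{F}')$ where $\mathcal{F}'=\{F\in\mathcal{F}: e\notin F\}$ if $e$ is not a coloop and $\mathcal{F}'=\{F\setminus e: F\in\mathcal{F}\}$ if $e$ is a coloop; deleting a set of elements one at a time is order-independent. The restriction $D|_{A}$ is the result of deleting all elements of $E\setminus A$. *)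

theory Defs
  imports Main
begin

type_synonym 'a set_system = "'a set \<times> 'a set set"

definition symdiff :: "'a set \<Rightarrow> 'a set \<Rightarrow> 'a set" where
  "symdiff X Y = (X - Y) \<union> (Y - X)"

definition delta_matroid :: "'a set_system \<Rightarrow> bool" where
  "delta_matroid D \<longleftrightarrow>
     (let E = fst D; F = snd D in
       finite E \<and> F \<noteq> {} \<and> (\<forall>X\<in>F. X \<subseteq> E) \<and>
       (\<forall>X\<in>F. \<forall>Y\<in>F. \<forall>u\<in>symdiff X Y. \<exists>v\<in>symdiff X Y. symdiff X {u, v} \<in> F))"

definition normal :: "'a set_system \<Rightarrow> bool" where
  "normal D \<longleftrightarrow> {} \<in> snd D"

definition twist :: "'a set_system \<Rightarrow> 'a set \<Rightarrow> 'a set_system" where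
  "twist D A = (fst D, (\<lambda>X. symdiff A X) ` snd D)"

definition width :: "'a set_system \<Rightarrow> nat" where
  "width D = Max (card ` snd D) - Min (card ` snd D)"

definition coloop :: "'a set_system \<Rightarrow> 'a \<Rightarrow> bool" where
  "coloop D e \<longleftrightarrow> (\<forall>X\<in>snd D. e \<in> X)"

definition delete :: "'a set_system \<Rightarrow> 'a \<Rightarrow> 'a set_system" where
  "delete D e = (fst D - {e},
     if coloop D e then (\<lambda>X. X - {e}) ` snd D else {X \<in> snd D. e \<notin> X})"

definition delete_list :: "'a set_system \<Rightarrow> 'a list \<Rightarrow> 'a set_system" where
  "delete_list D xs = foldl delete D xs"

text \<open>Restriction to A: delete the elements of E \ A one at a time (in some enumeration;
  the result is order independent).\<close>
definition restrict :: "'a set_system \<Rightarrow> 'a set \<Rightarrow> 'a set_system" where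
  "restrict D A = delete_list D (SOME xs. distinct xs \<and> set xs = fst D - A)"

end

theory Submission
  imports Defs
begin

text \<open>In a normal delta-matroid the exchange axiom for a feasible X and the empty set deletes
  from X any chosen element together with at most one further element. Deleting elements outside
  a set B in this way yields a feasible subset of X \<inter> B that misses at most |X - B| elements of
  X \<inter> B. Restrictions stay normal, so their widths are their largest feasible cardinalities, and
  applied with B = A and B = E - A the deletion argument shows that |A \<Delta> X| ranges exactly
  between |A| - w(D|A) and |A| + w(D|E - A).\<close>

lemma card_symdiff:
  assumes "finite A" "finite X"
  shows "card (symdiff A X) + card (A \<inter> X) = card A + card (X - A)"
proof -
  have "card (symdiff A X) = card (A - X) + card (X - A)"
    unfolding symdiff_def using assms by (subst card_Un_disjoint) auto
  moreover have "card (A - X) + card (A \<inter> X) = card A"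
    using card_Int_Diff[OF assms(1), of X] by simp
  ultimately show ?thesis by simp
qed

lemma width_eq_Max_card:
  assumes "finite F" "{} \<in> F"
  shows "width (E, F) = Max (card ` F)"
proof -
  have "Min (card ` F) = 0"
    using assms by (intro Min_eqI) (auto intro: image_eqI[of 0 card "{}"])
  then show ?thesis by (simp add: width_def)
qed

lemma delete_list_normal:
  "{} \<in> snd D \<Longrightarrow> delete_list D xs = (fst D - set xs, {X \<in> snd D. X \<inter> set xs = {}})"
proof (induction xs arbitrary: D)
  case Nil
  then show ?case by (simp add: delete_list_def)
next
  case (Cons x xs)
  have "\<not> coloop D x" using Cons.prems by (auto simp: coloop_def)
  then have "delete D x = (fst D - {x}, {X \<in> snd D. x \<notin> X})" by (simp add: delete_def)
  moreover have "delete_list D (x # xs) = delete_list (delete D x) xs"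
    by (simp add: delete_list_def)
  ultimately show ?case using Cons.IH[of "delete D x"] Cons.prems by auto
qed

locale normal_delta_matroid =
  fixes E :: "'a set" and F :: "'a set set"
  assumes delta_matroid: "delta_matroid (E, F)" and empty_feasible: "{} \<in> F"
begin

lemma finite_ground: "finite E"
  and feasible_subset: "X \<in> F \<Longrightarrow> X \<subseteq> E"
  and exchange: "X \<in> F \<Longrightarrow> Y \<in> F \<Longrightarrow> u \<in> symdiff X Y \<Longrightarrow> \<exists>v\<in>symdiff X Y. symdiff X {u, v} \<in> F"
  using delta_matroid unfolding delta_matroid_def Let_def by auto

lemma finite_feasible: "X \<in> F \<Longrightarrow> finite X"
  using finite_ground feasible_subset finite_subset by blast

lemma finite_family: "finite F"
  using finite_ground feasible_subset by (meson Pow_iff finite_Pow_iff finite_subset subsetI)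

lemma remove_pair:
  assumes "X \<in> F" "u \<in> X"
  obtains v where "v \<in> X" "X - {u, v} \<in> F"
proof -
  have "u \<in> symdiff X {}" using assms(2) by (simp add: symdiff_def)
  then obtain v where "v \<in> symdiff X {}" "symdiff X {u, v} \<in> F"
    using exchange[OF assms(1) empty_feasible] by blast
  moreover from this have "v \<in> X" "symdiff X {u, v} = X - {u, v}"
    using assms(2) by (auto simp: symdiff_def)
  ultimately show thesis using that by simp
qed

lemma ex_feasible_subset_Int:
  assumes "X \<in> F"
  shows "\<exists>Y\<in>F. Y \<subseteq> X \<inter> B \<and> card (X \<inter> B) \<le> card Y + card (X - B)"
  using assms
proof (induction "card (X - B)" arbitrary: X rule: less_induct)
  case less
  show ?case
  proof (cases "X \<subseteq> B")
    case True
    then have "X \<inter> B = X" by blast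
    then show ?thesis using less.prems by (intro bexI[of _ X]) auto
  next
    case False
    then obtain u where u: "u \<in> X" "u \<notin> B" by auto
    obtain v where v: "v \<in> X" and X'_feasible: "X - {u, v} \<in> F"
      using remove_pair[OF less.prems u(1)] .
    define X' where "X' = X - {u, v}"
    have fin: "finite X" using finite_feasible[OF less.prems] .
    have outside: "card (X' - B) < card (X - B)"
      using fin u by (intro psubset_card_mono) (auto simp: X'_def)
    have inside: "card (X \<inter> B) \<le> Suc (card (X' \<inter> B))"
    proof -
      have "X \<inter> B \<subseteq> insert v (X' \<inter> B)" using u(2) by (auto simp: X'_def)
      then have "card (X \<inter> B) \<le> card (insert v (X' \<inter> B))"
        using fin by (intro card_mono) (auto simp: X'_def)
      also have "\<dots> \<le> Suc (card (X' \<inter> B))"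
        using fin by (simp add: card_insert_if X'_def)
      finally show ?thesis .
    qed
    obtain Y where "Y \<in> F" "Y \<subseteq> X' \<inter> B" "card (X' \<inter> B) \<le> card Y + card (X' - B)"
      using less.hyps[OF outside] X'_feasible by (auto simp: X'_def)
    moreover have "X' \<inter> B \<subseteq> X \<inter> B" by (auto simp: X'_def)
    ultimately show ?thesis using inside outside by (intro bexI[of _ Y]) auto
  qed
qed

lemma restrict_eq:
  assumes "A \<subseteq> E"
  shows "restrict (E, F) A = (A, {X \<in> F. X \<subseteq> A})"
proof -
  let ?xs = "SOME xs. distinct xs \<and> set xs = E - A"
  have "\<exists>xs. distinct xs \<and> set xs = E - A"
    using finite_ground finite_distinct_list by blast
  then have "set ?xs = E - A" by (rule someI2_ex) simp
  moreover have "{X \<in> F. X \<inter> (E - A) = {}} = {X \<in> F. X \<subseteq> A}"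
    using feasible_subset by blast
  moreover have "E - (E - A) = A" using assms by blast
  ultimately show ?thesis
    unfolding restrict_def using delete_list_normal[of "(E, F)" ?xs] empty_feasible by simp
qed

lemma width_restrict:
  assumes "A \<subseteq> E"
  shows "width (restrict (E, F) A) = Max (card ` {X \<in> F. X \<subseteq> A})"
  using restrict_eq[OF assms] finite_family empty_feasible by (simp add: width_eq_Max_card)

lemma card_le_width_restrict:
  "A \<subseteq> E \<Longrightarrow> X \<in> F \<Longrightarrow> X \<subseteq> A \<Longrightarrow> card X \<le> width (restrict (E, F) A)"
  using finite_family by (simp add: width_restrict)

lemma width_restrict_attained:
  assumes "A \<subseteq> E"
  obtains Y where "Y \<in> F" "Y \<subseteq> A" "card Y = width (restrict (E, F) A)"
proof -
  have "Max (card ` {X \<in> F. X \<subseteq> A}) \<in> card ` {X \<in> F. X \<subseteq> A}"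
    using finite_family empty_feasible by (intro Max_in) auto
  then show thesis using that width_restrict[OF assms] by auto
qed

lemma Max_card_twist:
  assumes "A \<subseteq> E"
  shows "Max (card ` symdiff A ` F) = card A + width (restrict (E, F) (E - A))"
proof (rule Max_eqI)
  show "finite (card ` symdiff A ` F)" using finite_family by simp
next
  fix n assume "n \<in> card ` symdiff A ` F"
  then obtain X where X: "X \<in> F" "n = card (symdiff A X)" by auto
  obtain Y where Y: "Y \<in> F" "Y \<subseteq> X \<inter> (E - A)"
    "card (X \<inter> (E - A)) \<le> card Y + card (X - (E - A))"
    using ex_feasible_subset_Int[OF X(1)] by blast
  have "X \<inter> (E - A) = X - A" "X - (E - A) = A \<inter> X" using feasible_subset[OF X(1)] by auto
  with Y(3) have "card (X - A) \<le> card Y + card (A \<inter> X)" by simp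
  moreover have "card Y \<le> width (restrict (E, F) (E - A))"
    using Y by (intro card_le_width_restrict) auto
  moreover note card_symdiff[OF finite_subset[OF assms finite_ground] finite_feasible[OF X(1)]]
  ultimately show "n \<le> card A + width (restrict (E, F) (E - A))" using X(2) by linarith
next
  obtain Y where Y: "Y \<in> F" "Y \<subseteq> E - A" "card Y = width (restrict (E, F) (E - A))"
    using width_restrict_attained[OF Diff_subset] by blast
  have "symdiff A Y = A \<union> Y" using Y(2) by (auto simp: symdiff_def)
  moreover have "card (A \<union> Y) = card A + card Y"
    using Y(2) finite_subset[OF assms finite_ground] finite_feasible[OF Y(1)]
    by (intro card_Un_disjoint) auto
  ultimately have "card (symdiff A Y) = card A + width (restrict (E, F) (E - A))"
    using Y(3) by simp
  moreover have "card (symdiff A Y) \<in> card ` symdiff A ` F" using Y(1) by blast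
  ultimately show "card A + width (restrict (E, F) (E - A)) \<in> card ` symdiff A ` F" by simp
qed

lemma Min_card_twist:
  assumes "A \<subseteq> E"
  shows "Min (card ` symdiff A ` F) = card A - width (restrict (E, F) A)"
proof (rule Min_eqI)
  show "finite (card ` symdiff A ` F)" using finite_family by simp
next
  fix n assume "n \<in> card ` symdiff A ` F"
  then obtain X where X: "X \<in> F" "n = card (symdiff A X)" by auto
  obtain Y where Y: "Y \<in> F" "Y \<subseteq> X \<inter> A" "card (X \<inter> A) \<le> card Y + card (X - A)"
    using ex_feasible_subset_Int[OF X(1)] by blast
  have "A \<inter> X = X \<inter> A" by blast
  with Y(3) have "card (A \<inter> X) \<le> card Y + card (X - A)" by simp
  moreover have "card Y \<le> width (restrict (E, F) A)"
    using Y assms by (intro card_le_width_restrict) auto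
  moreover note card_symdiff[OF finite_subset[OF assms finite_ground] finite_feasible[OF X(1)]]
  ultimately show "card A - width (restrict (E, F) A) \<le> n" using X(2) by linarith
next
  obtain Y where Y: "Y \<in> F" "Y \<subseteq> A" "card Y = width (restrict (E, F) A)"
    using width_restrict_attained[OF assms] by blast
  have "symdiff A Y = A - Y" using Y(2) by (auto simp: symdiff_def)
  moreover have "card (A - Y) = card A - card Y"
    using Y(2) finite_feasible[OF Y(1)] by (intro card_Diff_subset)
  ultimately have "card (symdiff A Y) = card A - width (restrict (E, F) A)"
    using Y(3) by simp
  moreover have "card (symdiff A Y) \<in> card ` symdiff A ` F" using Y(1) by blast
  ultimately show "card A - width (restrict (E, F) A) \<in> card ` symdiff A ` F" by simp
qed

lemma width_restrict_le_card:
  assumes "A \<subseteq> E"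
  shows "width (restrict (E, F) A) \<le> card A"
proof -
  obtain Y where "Y \<in> F" "Y \<subseteq> A" "card Y = width (restrict (E, F) A)"
    using width_restrict_attained[OF assms] by blast
  then show ?thesis using assms finite_ground by (metis card_mono finite_subset)
qed

end

theorem mainTheorem7:
  fixes E :: "'a set" and F :: "'a set set" and A :: "'a set"
  assumes "delta_matroid (E, F)" and "normal (E, F)" and "A \<subseteq> E"
  shows "width (twist (E, F) A) = width (restrict (E, F) A) + width (restrict (E, F) (E - A))"
proof -
  interpret normal_delta_matroid E F
    using assms(1,2) by unfold_locales (simp_all add: normal_def)
  have "width (twist (E, F) A) = Max (card ` symdiff A ` F) - Min (card ` symdiff A ` F)"
    by (simp add: width_def twist_def image_image)
  also have "\<dots> = (card A + width (restrict (E, F) (E - A))) - (card A - width (restrict (E, F) A))"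
    using Max_card_twist[OF assms(3)] Min_card_twist[OF assms(3)] by (simp only:)
  finally show ?thesis using width_restrict_le_card[OF assms(3)] by linarith
qed

end
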